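(* Let $\mathcal{R}$ be a finite valuation ring with residue field of cardinality $q$ and with uniformizer of nilpotency degree $r$ (so $|\mathcal{R}|=q^r$), and let $\mathcal{R}^*$ denote its group of units. Let $G$ be a subgroup of $\mathcal{R}^*$, let $g,h\colon G\to\mathcal{R}^*$ be arbitrary functions, and define $f\colon G\times\mathcal{R}^*\to\mathcal{R}$ by $f(x,y)=g(x)(h(x)+y)$. Put $m=\mu(g\cdot h)$, where $(g\cdot h)(x)=g(x)h(x)$. Then there is a constant $c>0$ depending only on $r$ such that for all sets $A\subset G$ and $B,C\subset\mathcal{R}^*$, \[|f(A,B)|\,|B\cdot C|\ \ge\ c\min\left\{\frac{q^r|B|}{m},\ \frac{|A||B|^2|C|}{m^2q^{2r-1}}\right\}.\]
   Context: A finite valuation ring is a finite commutative ring with identity that is local (has a unique maximal ideal) and principal (every ideal is principal); its maximal ideal is generated by a non-unit $z$ (a uniformizer), the residue field $\mathcal{R}/(z)$ has $q$ elements, and $r$ is the least integer with $z^r=0$. For a function $\varphi\colon G\to\mathcal{R}$, $\mu(\varphi)=\max_{t\in\mathcal{R}}|\{x\in G:\varphi(x)=t\}|$. Notation: $f(A,B)=\{f(x,y):x\in A,y\in B\}$ and $B\cdot C=\{bc:b\in B,c\in C\}$. *)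

theory Defs
  imports "HOL-Algebra.Algebra" "HOL-Analysis.Analysis"
begin

definition finite_valuation_ring :: "('a, 'b) ring_scheme \<Rightarrow> bool" where
  "finite_valuation_ring R \<longleftrightarrow>
     cring R \<and> finite (carrier R) \<and>
     (\<exists>!M. maximalideal M R) \<and>
     (\<forall>I. ideal I R \<longrightarrow> principalideal I R)"

definition mu :: "('a, 'b) ring_scheme \<Rightarrow> 'c set \<Rightarrow> ('c \<Rightarrow> 'a) \<Rightarrow> nat" where
  "mu R D \<phi> = Max ((\<lambda>t. card {x \<in> D. \<phi> x = t}) ` carrier R)"

end

theory Submission
  imports Defs
begin

text \<open>
  Count incidences between the points Y \<times> X, where X = f(A, B) and Y = B \<cdot> C, and all |R|^2 lines
  t = b + a s. Their total is |R| |X| |Y|. Two points whose first coordinates differ by a unit lie on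
  exactly one common line, and a first coordinate has at most |M| = q^(r-1) others differing from it
  by a non-unit, so the squared deviations of the incidence counts from their mean sum to at most
  |M| |R| |X| |Y|. For a \<in> A and c \<in> C
  the line t = g(a) h(a) + g(a) c^-1 s passes through the |B| points (b c, f(a, b)), and each line
  arises from at most m such pairs (a, c). Hence either |B| is at most twice the mean |X| |Y| / |R|,
  or these rich lines alone contribute at least |A| |C| |B|^2 / (4 m) to that sum; either way the
  bound holds with c = 1/4. The cardinalities |R| = q^r and |M| = q^(r-1) come from the chain of ideals z^i R,
  each of index q in its predecessor.
\<close>

section \<open>Finite local rings\<close>

lemma (in ring) cgenideal_eq_image: "x \<in> carrier R \<Longrightarrow> PIdl x = (\<lambda>y. y \<otimes> x) ` carrier R"
  unfolding cgenideal_def by (simp add: Setcompr_eq_image)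

lemma (in ring) card_carrier_eq_card_Quot_mult_card:
  assumes "finite (carrier R)" and "ideal I R"
  shows "card (carrier R) = card (carrier (R Quot I)) * card I"
  using a_lagrange[OF assms(1) ideal.axioms(1)[OF assms(2)]]
  by (simp add: FactRing_def Coset.order_def)

lemma (in ring) card_eq_card_image_mult_card_kernel:
  assumes S: "additive_subgroup S R" and fin: "finite S" and a: "a \<in> carrier R"
  shows "card S = card ((\<lambda>y. y \<otimes> a) ` S) * card {y \<in> S. y \<otimes> a = \<zero>}"
proof -
  interpret S: additive_subgroup S R by (rule S)
  let ?K = "{y \<in> S. y \<otimes> a = \<zero>}"
  have fibre: "{y \<in> S. y \<otimes> a = y0 \<otimes> a} = (\<lambda>k. y0 \<oplus> k) ` ?K" if y0: "y0 \<in> S" for y0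
  proof (intro equalityI subsetI)
    fix y assume y: "y \<in> {y \<in> S. y \<otimes> a = y0 \<otimes> a}"
    have carr: "y \<in> carrier R" "y0 \<in> carrier R" using y y0 S.a_subset by auto
    have "(y \<ominus> y0) \<otimes> a = \<zero>" using y carr a by (simp add: minus_eq l_distr l_minus r_neg)
    moreover have "y \<ominus> y0 \<in> S" using y y0 by (simp add: minus_eq S.a_closed S.a_inv_closed)
    moreover have "y = y0 \<oplus> (y \<ominus> y0)" using carr by algebra
    ultimately show "y \<in> (\<lambda>k. y0 \<oplus> k) ` ?K" by (intro image_eqI) simp_all
  next
    fix y assume "y \<in> (\<lambda>k. y0 \<oplus> k) ` ?K"
    then obtain k where k: "k \<in> S" "k \<otimes> a = \<zero>" "y = y0 \<oplus> k" by auto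
    have carr: "k \<in> carrier R" "y0 \<in> carrier R" using k y0 S.a_subset by auto
    have "y \<otimes> a = y0 \<otimes> a" using k carr a by (simp add: l_distr)
    then show "y \<in> {y \<in> S. y \<otimes> a = y0 \<otimes> a}" using k y0 S.a_closed by simp
  qed
  have card_fibre: "card {y \<in> S. y \<otimes> a = t} = card ?K" if t: "t \<in> (\<lambda>y. y \<otimes> a) ` S" for t
  proof -
    obtain y0 where y0: "y0 \<in> S" "t = y0 \<otimes> a" using t by auto
    have "inj_on (\<lambda>k. y0 \<oplus> k) ?K"
    proof (rule inj_onI)
      fix k k' assume "k \<in> ?K" "k' \<in> ?K" "y0 \<oplus> k = y0 \<oplus> k'"
      moreover have "k = \<ominus> y0 \<oplus> (y0 \<oplus> k)" if "k \<in> S" for k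
        using that y0(1) S.a_subset by (auto simp: a_assoc[symmetric] l_neg)
      ultimately show "k = k'" by (metis (no_types, lifting) mem_Collect_eq)
    qed
    then show ?thesis using fibre[OF y0(1)] y0(2) by (simp add: card_image)
  qed
  have "card S = (\<Sum>t\<in>(\<lambda>y. y \<otimes> a) ` S. card {y \<in> S. y \<otimes> a = t})"
    using sum.image_gen[OF fin, of "\<lambda>_. 1::nat" "\<lambda>y. y \<otimes> a"] by simp
  also have "\<dots> = card ((\<lambda>y. y \<otimes> a) ` S) * card ?K" by (simp add: card_fibre)
  finally show ?thesis .
qed

locale finite_local_ring = cring +
  fixes M :: "'a set"
  assumes finite_carrier: "finite (carrier R)"
    and maximalideal_M: "maximalideal M R"
    and maximalideal_unique: "maximalideal J R \<Longrightarrow> J = M"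

sublocale finite_local_ring \<subseteq> M: maximalideal M R
  by (rule maximalideal_M)

context finite_local_ring
begin

lemma one_notin_M: "\<one> \<notin> M"
  using M.one_imp_carrier M.I_notcarr by blast

lemma zero_in_M: "\<zero> \<in> M"
  using additive_subgroup.zero_closed[OF M.additive_subgroup_axioms] .

lemma finite_M: "finite M"
  using finite_carrier M.a_subset finite_subset by blast

lemma card_M_gt_0: "card M > 0"
proof -
  have "M \<noteq> {}" using zero_in_M by blast
  then show ?thesis using finite_M by (simp add: card_gt_0_iff)
qed

lemma nonunit_in_M:
  assumes x: "x \<in> carrier R" "x \<notin> Units R"
  shows "x \<in> M"
proof -
  define S where "S = {J. ideal J R \<and> PIdl x \<subseteq> J \<and> \<one> \<notin> J}"
  have "\<one> \<notin> PIdl x"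
  proof
    assume "\<one> \<in> PIdl x"
    then obtain y where "y \<in> carrier R" "\<one> = y \<otimes> x" unfolding cgenideal_def by blast
    then have "x \<in> Units R" using x(1) m_comm unfolding Units_def by auto
    with x(2) show False ..
  qed
  then have x_S: "PIdl x \<in> S" unfolding S_def using cgenideal_ideal[OF x(1)] by simp
  have "S \<subseteq> Pow (carrier R)"
    unfolding S_def using ideal.axioms(1)[THEN additive_subgroup.a_subset] by blast
  then have "finite S" using finite_carrier by (simp add: finite_subset)
  obtain J where J: "J \<in> S" and J_max: "\<And>J'. J' \<in> S \<Longrightarrow> J \<subseteq> J' \<Longrightarrow> J = J'"
    using finite_has_maximal[OF \<open>finite S\<close>] x_S by auto
  have "maximalideal J R"
  proof (rule maximalidealI)
    show "ideal J R" and "carrier R \<noteq> J" using J unfolding S_def by auto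
  next
    fix J' assume J': "ideal J' R" "J \<subseteq> J'" "J' \<subseteq> carrier R"
    show "J' = J \<or> J' = carrier R"
    proof (cases "\<one> \<in> J'")
      case True then show ?thesis using ideal.one_imp_carrier[OF J'(1)] by simp
    next
      case False then show ?thesis using J J' J_max unfolding S_def by blast
    qed
  qed
  then have "J = M" by (rule maximalideal_unique)
  then show ?thesis using J cgenideal_self[OF x(1)] unfolding S_def by blast
qed

lemma Units_iff_notin_M:
  assumes "x \<in> carrier R"
  shows "x \<in> Units R \<longleftrightarrow> x \<notin> M"
proof
  assume "x \<in> Units R"
  then have "inv x \<otimes> x = \<one>" "inv x \<in> carrier R" by auto
  then show "x \<notin> M" using one_notin_M M.I_l_closed[of x "inv x"] by auto
qed (use nonunit_in_M assms in blast)

end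

locale finite_chain_ring = finite_local_ring +
  fixes z :: 'a
  assumes z_carrier: "z \<in> carrier R"
    and M_eq_PIdl: "M = PIdl z"
  fixes q r :: nat
  assumes q_def: "q = card (carrier (R Quot M))"
    and r_def: "r = (LEAST n. z [^] n = \<zero>)"
begin

lemma pow_in_M:
  assumes "(n::nat) \<ge> 1" shows "z [^] n \<in> M"
proof -
  have "z [^] n = z [^] (n - 1) \<otimes> z"
    using assms nat_pow_Suc[of z "n - 1"] by (simp del: nat_pow_Suc)
  then show ?thesis using z_carrier unfolding M_eq_PIdl cgenideal_def by auto
qed

lemma z_nilpotent: "\<exists>n::nat. z [^] n = \<zero>"
proof -
  have "finite (range (\<lambda>n::nat. z [^] n))"
    using z_carrier by (intro finite_subset[OF _ finite_carrier]) auto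
  then have "\<not> inj (\<lambda>n::nat. z [^] n)" using range_inj_infinite by auto
  then obtain a b :: nat where "a < b" "z [^] a = z [^] b"
    unfolding inj_def by (metis linorder_neqE_nat)
  then obtain p where p: "p \<ge> 1" and period: "z [^] a = z [^] (a + p)"
    by (intro that[of "b - a"]) auto
  have zp: "z [^] p \<in> M" using pow_in_M[OF p] .
  have zp_carr: "z [^] p \<in> carrier R" and za_carr: "z [^] a \<in> carrier R"
    using z_carrier by simp_all
  have "\<one> \<ominus> z [^] p \<notin> M"
  proof
    assume "\<one> \<ominus> z [^] p \<in> M"
    then have "(\<one> \<ominus> z [^] p) \<oplus> z [^] p \<in> M" using zp by (rule M.a_closed)
    moreover have "(\<one> \<ominus> z [^] p) \<oplus> z [^] p = \<one>" using zp_carr by algebra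
    ultimately show False using one_notin_M by simp
  qed
  then have unit: "\<one> \<ominus> z [^] p \<in> Units R" using Units_iff_notin_M zp_carr by simp
  have "z [^] a \<otimes> (\<one> \<ominus> z [^] p) = z [^] a \<ominus> z [^] a \<otimes> z [^] p"
    using za_carr zp_carr by algebra
  also have "z [^] a \<otimes> z [^] p = z [^] a"
    using nat_pow_mult[OF z_carrier, of a p] period by simp
  also have "z [^] a \<ominus> z [^] a = \<zero>" using za_carr by (simp add: r_neg minus_eq)
  finally have "(z [^] a \<otimes> (\<one> \<ominus> z [^] p)) \<otimes> inv (\<one> \<ominus> z [^] p) = \<zero>"
    using unit by simp
  then have "z [^] a = \<zero>" using unit za_carr by (simp add: m_assoc Units_closed)
  then show ?thesis ..
qed

lemma pow_r_eq_zero: "z [^] r = \<zero>"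
  unfolding r_def using z_nilpotent by (rule LeastI_ex)

lemma pow_neq_zero: "i < r \<Longrightarrow> z [^] i \<noteq> \<zero>"
  unfolding r_def by (rule not_less_Least)

lemma r_ge_1: "r \<ge> 1"
proof (rule ccontr)
  assume "\<not> r \<ge> 1"
  then have "r = 0" by simp
  then have "\<one> = \<zero>" using pow_r_eq_zero by simp
  then show False using one_notin_M zero_in_M by simp
qed

lemma card_PIdl_pow_Suc:
  assumes i: "i < r"
  shows "card (PIdl (z [^] i)) = q * card (PIdl (z [^] Suc i))"
proof -
  let ?a = "z [^] i"
  let ?K = "{y \<in> M. y \<otimes> ?a = \<zero>}"
  have a: "?a \<in> carrier R" using z_carrier by simp
  have kernel_in_M: "{y \<in> carrier R. y \<otimes> ?a = \<zero>} = ?K"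
  proof -
    have "y \<in> M" if y: "y \<in> carrier R" "y \<otimes> ?a = \<zero>" for y
    proof (rule ccontr)
      assume "y \<notin> M"
      then have "y \<in> Units R" using Units_iff_notin_M y(1) by simp
      then have "?a = inv y \<otimes> (y \<otimes> ?a)" using a by (simp add: m_assoc[symmetric] Units_closed)
      then show False using y(2) pow_neq_zero[OF i] \<open>y \<in> Units R\<close> by simp
    qed
    then show ?thesis using M.a_subset by blast
  qed
  have image_M: "(\<lambda>y. y \<otimes> ?a) ` M = PIdl (z [^] Suc i)"
  proof -
    have "(x \<otimes> z) \<otimes> ?a = x \<otimes> z [^] Suc i" if "x \<in> carrier R" for x
      using that z_carrier a by (simp add: m_assoc m_comm)
    then have "(\<lambda>y. y \<otimes> ?a) ` M = (\<lambda>x. x \<otimes> z [^] Suc i) ` carrier R"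
      unfolding M_eq_PIdl cgenideal_eq_image[OF z_carrier] image_image
      by (rule image_cong[OF refl])
    then show ?thesis using cgenideal_eq_image z_carrier by simp
  qed
  have "\<zero> \<in> ?K" using zero_in_M a by simp
  then have "?K \<noteq> {}" by blast
  then have "card ?K > 0" using finite_M by (simp add: card_gt_0_iff)
  moreover have "card (PIdl ?a) * card ?K = card (carrier R)"
    using card_eq_card_image_mult_card_kernel[OF oneideal[THEN ideal.axioms(1)] finite_carrier a]
      cgenideal_eq_image[OF a] kernel_in_M by simp
  moreover have "card (carrier R) = q * card M"
    unfolding q_def using finite_carrier M.is_ideal by (rule card_carrier_eq_card_Quot_mult_card)
  moreover have "card M = card (PIdl (z [^] Suc i)) * card ?K"
    using card_eq_card_image_mult_card_kernel[OF M.additive_subgroup_axioms finite_M a] image_M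
    by simp
  ultimately show ?thesis by simp
qed

lemma card_PIdl_pow: "k \<le> r \<Longrightarrow> card (PIdl (z [^] (r - k))) = q ^ k"
proof (induction k)
  case 0
  have "PIdl (z [^] r) = {\<zero>}" using pow_r_eq_zero cgenideal_eq_image by auto
  then show ?case by simp
next
  case (Suc k)
  then have "r - Suc k < r" and "Suc (r - Suc k) = r - k" by auto
  then show ?case using card_PIdl_pow_Suc[of "r - Suc k"] Suc by simp
qed

lemma card_carrier: "card (carrier R) = q ^ r"
proof -
  have "PIdl (z [^] (0::nat)) = carrier R" using cgenideal_eq_image by simp
  then show ?thesis using card_PIdl_pow[of r] by simp
qed

lemma card_M: "card M = q ^ (r - 1)"
  using card_PIdl_pow[of "r - 1"] r_ge_1 z_carrier unfolding M_eq_PIdl by simp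

lemma q_pow_2r_minus_1: "q ^ (2 * r - 1) = card M * card (carrier R)"
proof -
  have "2 * r - 1 = (r - 1) + r" using r_ge_1 by simp
  then show ?thesis unfolding card_carrier card_M by (simp add: power_add)
qed

end

section \<open>Incidences between points and lines\<close>

lemma sum_card_filter_swap:
  assumes "finite A" "finite B"
  shows "(\<Sum>a\<in>A. card {b \<in> B. P a b}) = (\<Sum>b\<in>B. card {a \<in> A. P a b})"
proof -
  have "(\<Sum>a\<in>A. card {b \<in> B. P a b}) = (\<Sum>a\<in>A. \<Sum>b\<in>B. if P a b then 1 else 0)"
    using assms by (simp add: sum.If_cases Int_def conj_commute)
  also have "\<dots> = (\<Sum>b\<in>B. \<Sum>a\<in>A. if P a b then 1 else 0)" by (rule sum.swap)
  also have "\<dots> = (\<Sum>b\<in>B. card {a \<in> A. P a b})"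
    using assms by (simp add: sum.If_cases Int_def conj_commute)
  finally show ?thesis .
qed

context ring
begin

text \<open>A pair \<open>(a, b)\<close> stands for the line \<open>{(s, b \<oplus> a \<otimes> s)}\<close>.\<close>

definition line_incidences :: "'a set \<Rightarrow> 'a set \<Rightarrow> 'a \<times> 'a \<Rightarrow> nat" where
  "line_incidences S T l = card {s \<in> S. snd l \<oplus> fst l \<otimes> s \<in> T}"

lemma card_lines_through:
  assumes s: "s \<in> carrier R" and T: "T \<subseteq> carrier R"
  shows "card {l \<in> carrier R \<times> carrier R. snd l \<oplus> fst l \<otimes> s \<in> T} = card (carrier R) * card T"
proof -
  have "bij_betw (\<lambda>(a, x). (a, x \<ominus> a \<otimes> s)) (carrier R \<times> T)
      {l \<in> carrier R \<times> carrier R. snd l \<oplus> fst l \<otimes> s \<in> T}"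
  proof (rule bij_betw_byWitness[where f' = "\<lambda>(a, b). (a, b \<oplus> a \<otimes> s)"])
    show "\<forall>p\<in>carrier R \<times> T. (\<lambda>(a, b). (a, b \<oplus> a \<otimes> s)) ((\<lambda>(a, x). (a, x \<ominus> a \<otimes> s)) p) = p"
      using s T by (auto simp: minus_eq a_assoc l_neg subset_iff)
    show "\<forall>l\<in>{l \<in> carrier R \<times> carrier R. snd l \<oplus> fst l \<otimes> s \<in> T}.
        (\<lambda>(a, x). (a, x \<ominus> a \<otimes> s)) ((\<lambda>(a, b). (a, b \<oplus> a \<otimes> s)) l) = l"
      using s by (auto simp: minus_eq a_assoc r_neg)
    show "(\<lambda>(a, x). (a, x \<ominus> a \<otimes> s)) ` (carrier R \<times> T)
        \<subseteq> {l \<in> carrier R \<times> carrier R. snd l \<oplus> fst l \<otimes> s \<in> T}"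
      using s T by (auto simp: minus_eq a_assoc l_neg subset_iff)
    show "(\<lambda>(a, b). (a, b \<oplus> a \<otimes> s)) ` {l \<in> carrier R \<times> carrier R. snd l \<oplus> fst l \<otimes> s \<in> T}
        \<subseteq> carrier R \<times> T"
      by auto
  qed
  from bij_betw_same_card[OF this] show ?thesis by (simp add: card_cartesian_product)
qed

lemma sum_line_incidences:
  assumes fin: "finite (carrier R)" and S: "S \<subseteq> carrier R" and T: "T \<subseteq> carrier R"
  shows "(\<Sum>l\<in>carrier R \<times> carrier R. line_incidences S T l) = card (carrier R) * card T * card S"
proof -
  have finS: "finite S" using fin S finite_subset by blast
  have "(\<Sum>l\<in>carrier R \<times> carrier R. line_incidences S T l)
      = (\<Sum>s\<in>S. card {l \<in> carrier R \<times> carrier R. snd l \<oplus> fst l \<otimes> s \<in> T})"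
    unfolding line_incidences_def using fin finS by (intro sum_card_filter_swap) simp_all
  also have "\<dots> = (\<Sum>s\<in>S. card (carrier R) * card T)"
    using S T card_lines_through by (intro sum.cong refl) blast
  finally show ?thesis by simp
qed

lemma card_lines_through_two:
  assumes s: "s \<in> carrier R" "s' \<in> carrier R" and unit: "s' \<ominus> s \<in> Units R"
    and T: "finite T"
  shows "card {l \<in> carrier R \<times> carrier R. snd l \<oplus> fst l \<otimes> s \<in> T \<and> snd l \<oplus> fst l \<otimes> s' \<in> T}
    \<le> card T ^ 2"
proof -
  let ?L = "{l \<in> carrier R \<times> carrier R. snd l \<oplus> fst l \<otimes> s \<in> T \<and> snd l \<oplus> fst l \<otimes> s' \<in> T}"
  have "inj_on (\<lambda>(a, b). (b \<oplus> a \<otimes> s, b \<oplus> a \<otimes> s')) ?L"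
  proof (rule inj_onI, clarify)
    fix a b a' b'
    assume carr: "a \<in> carrier R" "b \<in> carrier R" "a' \<in> carrier R" "b' \<in> carrier R"
      and eq: "b \<oplus> a \<otimes> s = b' \<oplus> a' \<otimes> s" "b \<oplus> a \<otimes> s' = b' \<oplus> a' \<otimes> s'"
    have "a \<otimes> (s' \<ominus> s) = (b \<oplus> a \<otimes> s') \<ominus> (b \<oplus> a \<otimes> s)" using carr s by algebra
    also have "\<dots> = a' \<otimes> (s' \<ominus> s)" unfolding eq using carr s by algebra
    finally have "a \<otimes> (s' \<ominus> s) \<otimes> inv (s' \<ominus> s) = a' \<otimes> (s' \<ominus> s) \<otimes> inv (s' \<ominus> s)"
      by simp
    then have "a = a'" using unit carr by (simp add: m_assoc Units_closed)
    then show "a = a' \<and> b = b'" using eq(1) carr s by (simp add: add.right_cancel)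
  qed
  then have "card ?L \<le> card (T \<times> T)"
    by (rule card_inj_on_le) (auto simp: T)
  then show ?thesis by (simp add: card_cartesian_product power2_eq_square)
qed

lemma card_lines_through_pair:
  assumes fin: "finite (carrier R)" and s: "s \<in> carrier R" "s' \<in> carrier R"
    and T: "T \<subseteq> carrier R"
  shows "card {l \<in> carrier R \<times> carrier R. snd l \<oplus> fst l \<otimes> s \<in> T \<and> snd l \<oplus> fst l \<otimes> s' \<in> T}
    \<le> card T ^ 2 + (if s' \<ominus> s \<in> Units R then 0 else card (carrier R) * card T)"
proof (cases "s' \<ominus> s \<in> Units R")
  case True
  then show ?thesis using card_lines_through_two[OF s True] fin T finite_subset by auto
next
  case False
  have "card {l \<in> carrier R \<times> carrier R. snd l \<oplus> fst l \<otimes> s \<in> T \<and> snd l \<oplus> fst l \<otimes> s' \<in> T}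
      \<le> card {l \<in> carrier R \<times> carrier R. snd l \<oplus> fst l \<otimes> s \<in> T}"
    using fin by (intro card_mono) auto
  then show ?thesis using False card_lines_through[OF s(1) T] by simp
qed

end

lemma (in cring) card_le_line_incidences:
  assumes uv: "u \<in> carrier R" "v \<in> carrier R" and c: "c \<in> Units R" and B: "B \<subseteq> carrier R"
    and S: "finite S" "\<And>b. b \<in> B \<Longrightarrow> b \<otimes> c \<in> S"
    and T: "\<And>b. b \<in> B \<Longrightarrow> u \<otimes> (v \<oplus> b) \<in> T"
  shows "card B \<le> line_incidences S T (u \<otimes> inv c, u \<otimes> v)"
  unfolding line_incidences_def
proof (rule card_inj_on_le)
  show "inj_on (\<lambda>b. b \<otimes> c) B"
    using c B by (intro inj_onI) (metis Units_closed m_comm Units_l_cancel subsetD)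
  have "u \<otimes> v \<oplus> u \<otimes> inv c \<otimes> (b \<otimes> c) = u \<otimes> (v \<oplus> b)" if "b \<in> B" for b
  proof -
    have b: "b \<in> carrier R" using that B by blast
    have "u \<otimes> inv c \<otimes> (b \<otimes> c) = u \<otimes> b \<otimes> (inv c \<otimes> c)"
      using uv b c by (simp add: m_ac Units_closed)
    then show ?thesis using uv b c by (simp add: r_distr)
  qed
  then show "(\<lambda>b. b \<otimes> c) ` B
      \<subseteq> {s \<in> S. snd (u \<otimes> inv c, u \<otimes> v) \<oplus> fst (u \<otimes> inv c, u \<otimes> v) \<otimes> s \<in> T}"
    using S T by auto
qed (use S in auto)

context finite_local_ring
begin

lemma card_nonunit_differences:
  assumes s: "s \<in> carrier R" and S: "S \<subseteq> carrier R"
  shows "card {s' \<in> S. s' \<ominus> s \<notin> Units R} \<le> card M"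
proof (rule card_inj_on_le)
  show "inj_on (\<lambda>s'. s' \<ominus> s) {s' \<in> S. s' \<ominus> s \<notin> Units R}"
    using s S by (intro inj_onI) (auto simp: minus_eq add.right_cancel subset_iff)
  show "(\<lambda>s'. s' \<ominus> s) ` {s' \<in> S. s' \<ominus> s \<notin> Units R} \<subseteq> M"
    using s S nonunit_in_M by auto
qed (rule finite_M)

lemma sum_card_lines_through_pair:
  assumes s: "s \<in> carrier R" and S: "S \<subseteq> carrier R" and T: "T \<subseteq> carrier R"
  shows "(\<Sum>s'\<in>S. card {l \<in> carrier R \<times> carrier R.
            snd l \<oplus> fst l \<otimes> s \<in> T \<and> snd l \<oplus> fst l \<otimes> s' \<in> T})
    \<le> card S * card T ^ 2 + card M * (card (carrier R) * card T)"
proof -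
  have "finite S" using finite_carrier S finite_subset by blast
  have "(\<Sum>s'\<in>S. card {l \<in> carrier R \<times> carrier R.
            snd l \<oplus> fst l \<otimes> s \<in> T \<and> snd l \<oplus> fst l \<otimes> s' \<in> T})
      \<le> (\<Sum>s'\<in>S. card T ^ 2 + (if s' \<ominus> s \<in> Units R then 0 else card (carrier R) * card T))"
    using card_lines_through_pair[OF finite_carrier s _ T] S by (intro sum_mono) blast
  also have "\<dots> = card S * card T ^ 2
      + card {s' \<in> S. s' \<ominus> s \<notin> Units R} * (card (carrier R) * card T)"
    using \<open>finite S\<close> by (simp add: sum.distrib sum.If_cases Int_def)
  also have "\<dots> \<le> card S * card T ^ 2 + card M * (card (carrier R) * card T)"
    using card_nonunit_differences[OF s S] by simp
  finally show ?thesis .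
qed

lemma sum_line_incidences_squared:
  assumes S: "S \<subseteq> carrier R" and T: "T \<subseteq> carrier R"
  shows "(\<Sum>l\<in>carrier R \<times> carrier R. (line_incidences S T l)\<^sup>2)
    \<le> card T ^ 2 * card S ^ 2 + card S * card M * card (carrier R) * card T"
proof -
  let ?lines = "carrier R \<times> carrier R"
  define on where "on l s \<longleftrightarrow> snd l \<oplus> fst l \<otimes> s \<in> T" for l s
  have finS: "finite S" using finite_carrier S finite_subset by blast
  have "(line_incidences S T l)\<^sup>2 = card {p \<in> S \<times> S. on l (fst p) \<and> on l (snd p)}" for l
  proof -
    have "{p \<in> S \<times> S. on l (fst p) \<and> on l (snd p)} = {s \<in> S. on l s} \<times> {s \<in> S. on l s}"
      by auto
    then show ?thesis
      unfolding line_incidences_def on_def by (simp add: card_cartesian_product power2_eq_square)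
  qed
  then have "(\<Sum>l\<in>?lines. (line_incidences S T l)\<^sup>2)
      = (\<Sum>p\<in>S \<times> S. card {l \<in> ?lines. on l (fst p) \<and> on l (snd p)})"
    using finite_carrier finS by (simp add: sum_card_filter_swap[of ?lines "S \<times> S"])
  also have "\<dots> = (\<Sum>s\<in>S. \<Sum>s'\<in>S. card {l \<in> ?lines. on l s \<and> on l s'})"
    by (simp add: sum.cartesian_product split_def)
  also have "\<dots> \<le> (\<Sum>s\<in>S. card S * card T ^ 2 + card M * (card (carrier R) * card T))"
    using sum_card_lines_through_pair S T unfolding on_def by (intro sum_mono) blast
  also have "\<dots> = card T ^ 2 * card S ^ 2 + card S * card M * card (carrier R) * card T"
    by (simp add: power2_eq_square algebra_simps)
  finally show ?thesis .
qed

end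

section \<open>Variance of incidence counts\<close>

lemma sum_squared_deviation:
  fixes n :: "'l \<Rightarrow> real" and \<mu> :: real
  assumes "(\<Sum>l\<in>U. n l) = card U * \<mu>"
  shows "(\<Sum>l\<in>U. (n l - \<mu>)\<^sup>2) = (\<Sum>l\<in>U. (n l)\<^sup>2) - card U * \<mu>\<^sup>2"
proof -
  have "(\<Sum>l\<in>U. (n l - \<mu>)\<^sup>2) = (\<Sum>l\<in>U. (n l)\<^sup>2) - 2 * \<mu> * (\<Sum>l\<in>U. n l) + card U * \<mu>\<^sup>2"
    by (simp add: power2_diff sum.distrib sum_subtractf sum_distrib_left sum_distrib_right mult_ac)
  then show ?thesis using assms by (simp add: power2_eq_square)
qed

lemma (in finite_local_ring) line_incidences_variance:
  assumes S: "S \<subseteq> carrier R" and T: "T \<subseteq> carrier R"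
  shows "(\<Sum>l\<in>carrier R \<times> carrier R.
            (real (line_incidences S T l) - real (card T) * real (card S) / real (card (carrier R)))\<^sup>2)
    \<le> real (card M) * real (card (carrier R)) * (real (card T) * real (card S))"
proof -
  let ?lines = "carrier R \<times> carrier R"
  define n where "n l = real (line_incidences S T l)" for l
  define Rn where "Rn = real (card (carrier R))"
  define Z where "Z = real (card T) * real (card S)"
  have "Rn > 0" unfolding Rn_def using finite_carrier zero_closed by (auto simp: card_gt_0_iff)
  have first_moment: "(\<Sum>l\<in>?lines. n l) = card ?lines * (Z / Rn)"
    using sum_line_incidences[OF finite_carrier S T] \<open>Rn > 0\<close>
    unfolding n_def Z_def Rn_def by (simp add: card_cartesian_product flip: of_nat_sum)
  have "real (\<Sum>l\<in>?lines. (line_incidences S T l)\<^sup>2)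
      \<le> real (card T ^ 2 * card S ^ 2 + card S * card M * card (carrier R) * card T)"
    using sum_line_incidences_squared[OF S T] by (rule of_nat_mono)
  then have "(\<Sum>l\<in>?lines. (n l)\<^sup>2) \<le> Z\<^sup>2 + card M * Rn * Z"
    unfolding n_def Z_def Rn_def by (simp add: power_mult_distrib algebra_simps)
  then have "(\<Sum>l\<in>?lines. (n l - Z / Rn)\<^sup>2) \<le> card M * Rn * Z"
    unfolding sum_squared_deviation[OF first_moment] using \<open>Rn > 0\<close>
    by (simp add: Rn_def card_cartesian_product power2_eq_square)
  then show ?thesis unfolding n_def Z_def Rn_def .
qed

lemma sum_comp_le_fibre_bound:
  fixes F :: "'l \<Rightarrow> real"
  assumes P: "finite P" and U: "finite U" and LU: "L ` P \<subseteq> U"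
    and fibre: "\<And>l. card {p \<in> P. L p = l} \<le> m" and F: "\<And>l. F l \<ge> 0"
  shows "(\<Sum>p\<in>P. F (L p)) \<le> m * (\<Sum>l\<in>U. F l)"
proof -
  have "(\<Sum>p\<in>P. F (L p)) = (\<Sum>l\<in>L ` P. \<Sum>p\<in>{p \<in> P. L p = l}. F (L p))"
    by (rule sum.image_gen[OF P])
  also have "\<dots> = (\<Sum>l\<in>L ` P. card {p \<in> P. L p = l} * F l)"
    by (intro sum.cong refl) simp
  also have "\<dots> \<le> (\<Sum>l\<in>L ` P. m * F l)"
    using fibre F by (intro sum_mono mult_right_mono) auto
  also have "\<dots> \<le> (\<Sum>l\<in>U. m * F l)"
    using F by (intro sum_mono2[OF U LU]) simp
  finally show ?thesis by (simp add: sum_distrib_left)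
qed

lemma deviation_dichotomy:
  fixes n :: "'l \<Rightarrow> real" and b \<mu> W :: real and m :: nat
  assumes P: "finite P" and U: "finite U" and LU: "L ` P \<subseteq> U"
    and fibre: "\<And>l. card {p \<in> P. L p = l} \<le> m"
    and rich: "\<And>p. p \<in> P \<Longrightarrow> b \<le> n (L p)"
    and \<mu>: "0 \<le> \<mu>" and variance: "(\<Sum>l\<in>U. (n l - \<mu>)\<^sup>2) \<le> W"
  shows "b \<le> 2 * \<mu> \<or> card P * b\<^sup>2 \<le> 4 * m * W"
proof (cases "b \<le> 2 * \<mu>")
  case False
  then have "(b / 2)\<^sup>2 \<le> (n (L p) - \<mu>)\<^sup>2" if "p \<in> P" for p
    using rich[OF that] \<mu> by (intro power_mono) auto
  then have "card P * (b / 2)\<^sup>2 \<le> (\<Sum>p\<in>P. (n (L p) - \<mu>)\<^sup>2)"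
    using sum_mono[of P "\<lambda>_. (b / 2)\<^sup>2"] by fastforce
  also have "\<dots> \<le> m * (\<Sum>l\<in>U. (n l - \<mu>)\<^sup>2)"
    by (rule sum_comp_le_fibre_bound[OF P U LU fibre]) simp
  also have "\<dots> \<le> m * W" using variance by (simp add: mult_left_mono)
  finally show ?thesis by (simp add: power_divide)
qed simp

lemma quarter_min_le_of_dichotomy:
  fixes Rn K m Z a b c :: real
  assumes "Rn > 0" "K > 0" "m \<ge> 1" "Z \<ge> 0" "b \<ge> 0"
    and "Rn * b \<le> 2 * Z \<or> a * c * b\<^sup>2 \<le> 4 * m * K * Z"
  shows "1/4 * min (Rn * b / m) (a * b\<^sup>2 * c / (m\<^sup>2 * K)) \<le> Z"
proof -
  have "min (Rn * b / m) (a * b\<^sup>2 * c / (m\<^sup>2 * K)) \<le> 4 * Z"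
    using assms(6)
  proof
    assume "Rn * b \<le> 2 * Z"
    moreover have "Rn * b / m \<le> Rn * b"
      using mult_left_mono[of 1 m "Rn * b"] assms by (simp add: divide_le_eq)
    ultimately show ?thesis using assms(4) by (simp add: min.coboundedI1)
  next
    assume "a * c * b\<^sup>2 \<le> 4 * m * K * Z"
    then have "a * b\<^sup>2 * c / (m\<^sup>2 * K) \<le> 4 * m * K * Z / (m\<^sup>2 * K)"
      using assms by (intro divide_right_mono) (simp_all add: algebra_simps)
    also have "\<dots> = 4 * Z / m" using assms by (simp add: power2_eq_square)
    also have "\<dots> \<le> 4 * Z"
      using mult_left_mono[of 1 m "4 * Z"] assms by (simp add: divide_le_eq)
    finally show ?thesis by (rule min.coboundedI2)
  qed
  then show ?thesis by simp
qed

lemma card_fibre_le_mu: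
  assumes "finite (carrier R)" and "\<phi> ` D \<subseteq> carrier R"
  shows "card {x \<in> D. \<phi> x = t} \<le> mu R D \<phi>"
proof (cases "t \<in> carrier R")
  case True
  then show ?thesis unfolding mu_def using assms(1) by (intro Max_ge) auto
next
  case False
  then have empty: "{x \<in> D. \<phi> x = t} = {}" using assms(2) by auto
  show ?thesis unfolding empty by simp
qed

lemma mu_ge_1:
  assumes "finite (carrier R)" and "\<phi> ` D \<subseteq> carrier R" and "finite D" and "x \<in> D"
  shows "mu R D \<phi> \<ge> 1"
proof -
  have "card {y \<in> D. \<phi> y = \<phi> x} \<ge> 1"
    using assms(3,4) card_gt_0_iff[of "{y \<in> D. \<phi> y = \<phi> x}"] by auto
  then show ?thesis using card_fibre_le_mu[OF assms(1,2)] order_trans by blast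
qed

lemma (in cring) card_line_fibre_le_mu:
  assumes fin: "finite (carrier R)" and G: "G \<subseteq> carrier R" and A: "A \<subseteq> G"
    and C: "C \<subseteq> Units R" and g: "\<forall>x\<in>G. g x \<in> Units R" and h: "\<forall>x\<in>G. h x \<in> Units R"
  shows "card {p \<in> A \<times> C. (g (fst p) \<otimes> inv (snd p), g (fst p) \<otimes> h (fst p)) = l}
    \<le> mu R G (\<lambda>x. g x \<otimes> h x)"
proof -
  let ?F = "{p \<in> A \<times> C. (g (fst p) \<otimes> inv (snd p), g (fst p) \<otimes> h (fst p)) = l}"
  have "inj_on fst ?F"
  proof (rule inj_onI)
    fix p p' assume p: "p \<in> ?F" "p' \<in> ?F" and "fst p = fst p'"
    then obtain a c c' where pp: "p = (a, c)" "p' = (a, c')" by (metis prod.collapse)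
    then have "g a \<otimes> inv c = g a \<otimes> inv c'" and "g a \<in> Units R" "c \<in> Units R" "c' \<in> Units R"
      using p A C g by auto
    then show "p = p'" using pp by (auto simp: Units_closed)
  qed
  moreover have "finite G" using fin G finite_subset by blast
  ultimately have "card ?F \<le> card {x \<in> G. g x \<otimes> h x = snd l}"
    using A by (intro card_inj_on_le) auto
  also have "\<dots> \<le> mu R G (\<lambda>x. g x \<otimes> h x)"
    using fin g h by (intro card_fibre_le_mu) auto
  finally show ?thesis .
qed

lemma (in finite_chain_ring) sum_product_estimate:
  assumes G: "subgroup G (units_of R)"
    and g: "\<forall>x\<in>G. g x \<in> Units R" and h: "\<forall>x\<in>G. h x \<in> Units R"
    and A: "A \<subseteq> G" and B: "B \<subseteq> Units R" and C: "C \<subseteq> Units R"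
  shows "real (card {g x \<otimes> (h x \<oplus> y) | x y. x \<in> A \<and> y \<in> B}) *
           real (card {b \<otimes> c | b c. b \<in> B \<and> c \<in> C})
         \<ge> 1/4 * min (real q ^ r * real (card B) / real (mu R G (\<lambda>x. g x \<otimes> h x)))
                (real (card A) * real (card B) ^ 2 * real (card C) /
                   (real (mu R G (\<lambda>x. g x \<otimes> h x)) ^ 2 * real q ^ (2 * r - 1)))"
proof -
  define T where "T = {g x \<otimes> (h x \<oplus> y) | x y. x \<in> A \<and> y \<in> B}"
  define S where "S = {b \<otimes> c | b c. b \<in> B \<and> c \<in> C}"
  define m where "m = mu R G (\<lambda>x. g x \<otimes> h x)"
  define Rn where "Rn = real (card (carrier R))"
  define Z where "Z = real (card T) * real (card S)"
  \<comment> \<open>the line through the points \<open>(b c, f(a, b))\<close>, \<open>b \<in> B\<close>\<close>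
  define L where "L p = (g (fst p) \<otimes> inv (snd p), g (fst p) \<otimes> h (fst p))" for p
  have G_carrier: "G \<subseteq> carrier R" using subgroup.subset[OF G] by (auto simp: units_of_carrier)
  have gh_A: "g x \<in> carrier R" "h x \<in> carrier R" if "x \<in> A" for x
    using that A g h by (auto intro: Units_closed)
  have B_carrier: "B \<subseteq> carrier R" and C_carrier: "C \<subseteq> carrier R"
    using B C by (auto intro: Units_closed)
  have T_carrier: "T \<subseteq> carrier R" and S_carrier: "S \<subseteq> carrier R"
    using gh_A B_carrier C_carrier unfolding T_def S_def by auto
  have "A \<subseteq> carrier R" using A G_carrier by blast
  then have finS: "finite S" and finAC: "finite (A \<times> C)"
    using S_carrier C_carrier finite_carrier by (auto intro: finite_subset)
  have "Rn > 0" unfolding Rn_def using finite_carrier zero_closed by (auto simp: card_gt_0_iff)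
  have gh_carrier: "(\<lambda>x. g x \<otimes> h x) ` G \<subseteq> carrier R" using g h by auto
  have "finite G" using G_carrier finite_carrier finite_subset by blast
  then have m_ge_1: "m \<ge> 1"
    unfolding m_def using mu_ge_1[OF finite_carrier gh_carrier] subgroup.one_closed[OF G] by blast
  have rich: "real (card B) \<le> real (line_incidences S T (L p))" if "p \<in> A \<times> C" for p
    using that gh_A B_carrier C finS unfolding L_def S_def T_def
    by (auto intro!: card_le_line_incidences) blast+
  have "L ` (A \<times> C) \<subseteq> carrier R \<times> carrier R"
    using gh_A C unfolding L_def by (auto intro: Units_inv_closed)
  moreover have "card {p \<in> A \<times> C. L p = l} \<le> m" for l
    unfolding L_def m_def by (rule card_line_fibre_le_mu[OF finite_carrier G_carrier A C g h])
  ultimately have "Rn * card B \<le> 2 * Z \<or>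
      real (card A) * real (card C) * (real (card B))\<^sup>2 \<le> 4 * real m * (card M * Rn) * Z"
    using deviation_dichotomy[OF finAC _ _ _ rich _ line_incidences_variance[OF S_carrier T_carrier]]
      finite_carrier \<open>Rn > 0\<close>
    unfolding Rn_def Z_def by (simp add: field_simps card_cartesian_product)
  then have "1/4 * min (Rn * card B / real m)
      (real (card A) * (real (card B))\<^sup>2 * real (card C) / ((real m)\<^sup>2 * (card M * Rn))) \<le> Z"
    using \<open>Rn > 0\<close> m_ge_1 card_M_gt_0 by (intro quarter_min_le_of_dichotomy) (auto simp: Z_def)
  moreover have "real q ^ r = Rn" and "real q ^ (2 * r - 1) = card M * Rn"
    using card_carrier arg_cong[OF q_pow_2r_minus_1, of real] unfolding Rn_def by simp_all
  ultimately show ?thesis unfolding T_def S_def m_def Z_def by simp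
qed

lemma finite_valuation_ring_sum_product_estimate:
  fixes R :: "('a, 'b) ring_scheme"
  assumes fvr: "finite_valuation_ring R" and M: "maximalideal M R"
    and z: "z \<in> carrier R" "M = PIdl\<^bsub>R\<^esub> z"
    and q: "q = card (carrier (R Quot M))" and r: "r = (LEAST n. z [^]\<^bsub>R\<^esub> n = \<zero>\<^bsub>R\<^esub>)"
    and G: "subgroup G (units_of R)"
    and g: "\<forall>x\<in>G. g x \<in> Units R" and h: "\<forall>x\<in>G. h x \<in> Units R"
    and A: "A \<subseteq> G" and B: "B \<subseteq> Units R" and C: "C \<subseteq> Units R"
  shows "real (card {g x \<otimes>\<^bsub>R\<^esub> (h x \<oplus>\<^bsub>R\<^esub> y) | x y. x \<in> A \<and> y \<in> B}) *
           real (card {b \<otimes>\<^bsub>R\<^esub> c | b c. b \<in> B \<and> c \<in> C})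
         \<ge> 1/4 * min (real q ^ r * real (card B) / real (mu R G (\<lambda>x. g x \<otimes>\<^bsub>R\<^esub> h x)))
                (real (card A) * real (card B) ^ 2 * real (card C) /
                   (real (mu R G (\<lambda>x. g x \<otimes>\<^bsub>R\<^esub> h x)) ^ 2 * real q ^ (2 * r - 1)))"
proof -
  have "cring R" and "finite (carrier R)" and unique: "\<exists>!M. maximalideal M R"
    using fvr unfolding finite_valuation_ring_def by auto
  moreover have "J = M" if "maximalideal J R" for J using unique M that by blast
  ultimately have "finite_local_ring R M"
    using M by (intro finite_local_ring.intro finite_local_ring_axioms.intro)
  then interpret finite_chain_ring R M z q r
    using z q r by (intro finite_chain_ring.intro finite_chain_ring_axioms.intro)
  show ?thesis using sum_product_estimate[OF G g h A B C] .
qed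

theorem theorem1p10:
  shows "\<exists>c :: nat \<Rightarrow> real. (\<forall>r. c r > 0) \<and>
    (\<forall>(R :: nat ring) M z q r G g h A B C.
       finite_valuation_ring R \<longrightarrow>
       maximalideal M R \<longrightarrow>
       z \<in> carrier R \<longrightarrow> M = PIdl\<^bsub>R\<^esub> z \<longrightarrow>
       q = card (carrier (R Quot M)) \<longrightarrow>
       r = (LEAST n. z [^]\<^bsub>R\<^esub> n = \<zero>\<^bsub>R\<^esub>) \<longrightarrow>
       subgroup G (units_of R) \<longrightarrow>
       (\<forall>x\<in>G. g x \<in> Units R) \<longrightarrow> (\<forall>x\<in>G. h x \<in> Units R) \<longrightarrow>
       A \<subseteq> G \<longrightarrow> B \<subseteq> Units R \<longrightarrow> C \<subseteq> Units R \<longrightarrow>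
       (let m = real (mu R G (\<lambda>x. g x \<otimes>\<^bsub>R\<^esub> h x));
            fAB = {g x \<otimes>\<^bsub>R\<^esub> (h x \<oplus>\<^bsub>R\<^esub> y) | x y. x \<in> A \<and> y \<in> B};
            BC = {b \<otimes>\<^bsub>R\<^esub> c' | b c'. b \<in> B \<and> c' \<in> C}
        in real (card fAB) * real (card BC) \<ge>
           c r * min (real q ^ r * real (card B) / m)
                     (real (card A) * real (card B) ^ 2 * real (card C) /
                        (m ^ 2 * real q ^ (2 * r - 1)))))"
  unfolding Let_def
  by (intro exI[of _ "\<lambda>_. 1/4"] conjI allI impI)
    (simp, rule finite_valuation_ring_sum_product_estimate)

end
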